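(* Let $t$ be a positive integer. For every integer $n\ge8$ and every $n$-vertex induced subgraph $G$ of $\mathcal T(G_t)$ (hence in particular of $W_t$), there is a node $u$ of $T_t$ such that the number of descendants of $u$ in $T_t$ that belong to $V(G)$ is at least $\frac{n}{8\cdot 3^{t+1}}$ and at most $\frac n4$, and every node $v$ of $T_t$ in the same layer as $u$ has at most $\frac n4$ descendants in $V(G)$.
   Context: A node is its own descendant. Construction of $G_t$, $T_t$, $W_t$: a countably infinite trigraph $G_t$ (with disjoint sets of black and red edges; its total graph $\mathcal T(G_t)$ has all black and red edges, its real graph $W_t$ only the black ones) and rooted tree $T_t$ on the same vertex set, partitioned into finite layers $L_0,L_1,\dots$ each inducing a left-to-right path of black edges. $L_0$ is a single vertex, the root of $T_t$. With $L_{\le i}=L_0\cup\dots\cup L_i$, layer $L_{i+1}$ is built (starting empty) as follows: for each $u\in L_i$ from left to right, let $N^\uparrow[u]:=(N_{\mathcal T(G_t)}(u)\cap L_{\le i-1})\cup\{u\}$; for every ordered pair $(B,R)$ of disjoint subsets of $N^\uparrow[u]$ with $|B\cup R|\le t$, append a new vertex $v_{B,R}$ at the right end of $L_{i+1}$, joined by a black edge to the previously rightmost vertex of $L_{i+1}$ (if any), make it a child of $u$ in $T_t$, and add black edges from $v_{B,R}$ to all of $B$ and red edges to all of $R$. *)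

theory Defs
  imports Complex_Main "HOL-Library.FSet"
begin

text \<open>A node v_{B,R} created as child of u is identified with the term Child u B R.
  Thus the vertex identity is exactly (parent, B, R), as in the construction.\<close>

datatype node = Root | Child node "node fset" "node fset"

text \<open>Black edges from v_{B,R} to all of B; red edges from v_{B,R} to all of R.
  (The black left-to-right path edges inside each layer are not modelled; they join
  vertices of the same layer only, hence never contribute to the up-neighbourhood
  N^up, and the statement does not refer to them.)\<close>

definition black_BR :: "node \<Rightarrow> node \<Rightarrow> bool" where
  "black_BR x y \<longleftrightarrow> (\<exists>p B R. x = Child p B R \<and> y |\<in>| B) \<or> (\<exists>p B R. y = Child p B R \<and> x |\<in>| B)"

definition red_BR :: "node \<Rightarrow> node \<Rightarrow> bool" where
  "red_BR x y \<longleftrightarrow> (\<exists>p B R. x = Child p B R \<and> y |\<in>| R) \<or> (\<exists>p B R. y = Child p B R \<and> x |\<in>| R)"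

definition total_adj :: "node \<Rightarrow> node \<Rightarrow> bool" where
  "total_adj x y \<longleftrightarrow> black_BR x y \<or> red_BR x y"

text \<open>N^up[u] for u in layer i, where P = L_{<= i-1}.\<close>
definition Nup :: "node set \<Rightarrow> node \<Rightarrow> node set" where
  "Nup P u = {w \<in> P. total_adj u w} \<union> {u}"

text \<open>lev t i = (L_{<= i-1}, L_i).\<close>
primrec lev :: "nat \<Rightarrow> nat \<Rightarrow> node set \<times> node set" where
  "lev t 0 = ({}, {Root})"
| "lev t (Suc i) = (let P = fst (lev t i); L = snd (lev t i) in
     (P \<union> L,
      {Child u B R | u B R. u \<in> L \<and> B |\<inter>| R = {||}
          \<and> fset (B |\<union>| R) \<subseteq> Nup P u \<and> fcard (B |\<union>| R) \<le> t}))"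

definition layer :: "nat \<Rightarrow> nat \<Rightarrow> node set" where
  "layer t i = snd (lev t i)"

definition vertices :: "nat \<Rightarrow> node set" where
  "vertices t = (\<Union>i. layer t i)"

inductive is_desc :: "node \<Rightarrow> node \<Rightarrow> bool" where
  self: "is_desc u u"
| child: "is_desc u v \<Longrightarrow> is_desc u (Child v B R)"

end

theory Submission
  imports Defs "HOL-Library.FuncSet"
begin

text \<open>A vertex \<open>u\<close> is adjacent to an earlier vertex \<open>w\<close> only if \<open>w\<close> is one of its own labels
  \<open>B \<union> R\<close>: were \<open>u\<close> a label of \<open>w\<close>, then \<open>w\<close> would lie in a deeper layer than \<open>u\<close>. Hence
  \<open>N\<^sup>\<up>[u]\<close> has at most \<open>t + 1\<close> elements, and since a child of \<open>u\<close> is a 3-colouring of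
  \<open>N\<^sup>\<up>[u]\<close> into black, red and absent, \<open>u\<close> has at most \<open>3\<^sup>t\<^sup>+\<^sup>1\<close> children.
  Now take the deepest layer containing a node \<open>x\<close> with more than \<open>n/4\<close> descendants in \<open>V(G)\<close>.
  The children of \<open>x\<close> have at most \<open>n/4\<close> each and together at least \<open>n/4 - 1 \<ge> n/8\<close>, so one
  of them has at least \<open>n/(8\<cdot>3\<^sup>t\<^sup>+\<^sup>1)\<close>.\<close>

primrec depth :: "node \<Rightarrow> nat" where
  "depth Root = 0"
| "depth (Child u B R) = Suc (depth u)"

primrec labels :: "node \<Rightarrow> node set" where
  "labels Root = {}"
| "labels (Child u B R) = fset B \<union> fset R"

lemma finite_labels [simp]: "finite (labels u)"
  by (cases u) auto

lemma total_adj_iff_labels: "total_adj u w \<longleftrightarrow> w \<in> labels u \<or> u \<in> labels w"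
  by (cases u; cases w) (auto simp: total_adj_def black_BR_def red_BR_def)

lemma fst_lev_eq_UN_layer: "fst (lev t j) = (\<Union>k<j. layer t k)"
  by (induction j) (auto simp: layer_def Let_def lessThan_Suc)

lemma layer_0 [simp]: "layer t 0 = {Root}"
  by (simp add: layer_def)

lemma mem_layer_Suc_iff:
  "c \<in> layer t (Suc j) \<longleftrightarrow> (\<exists>u B R. c = Child u B R \<and> u \<in> layer t j \<and> B |\<inter>| R = {||}
     \<and> fset (B |\<union>| R) \<subseteq> Nup (fst (lev t j)) u \<and> fcard (B |\<union>| R) \<le> t)"
  by (auto simp: layer_def Let_def)

lemma depth_of_mem_layer: "u \<in> layer t j \<Longrightarrow> depth u = j"
  by (induction j arbitrary: u) (auto simp: mem_layer_Suc_iff)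

lemma depth_of_label_less:
  assumes "u \<in> layer t j" "y \<in> labels u"
  shows "depth y < j"
proof (cases j)
  case 0
  then show ?thesis using assms by simp
next
  case (Suc j')
  then obtain p B R where u: "u = Child p B R" "p \<in> layer t j'"
    and "fset (B |\<union>| R) \<subseteq> Nup (fst (lev t j')) p"
    using assms(1) by (auto simp: mem_layer_Suc_iff)
  then have "y = p \<or> (\<exists>k<j'. y \<in> layer t k)"
    using assms(2) by (auto simp: Nup_def fst_lev_eq_UN_layer)
  then show ?thesis using u(2) Suc depth_of_mem_layer by fastforce
qed

lemma Nup_subset_labels:
  assumes "u \<in> layer t j"
  shows "Nup (fst (lev t j)) u \<subseteq> insert u (labels u)"
proof
  fix w assume "w \<in> Nup (fst (lev t j)) u"
  then consider "w = u" | k where "k < j" "w \<in> layer t k" "total_adj u w"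
    by (auto simp: Nup_def fst_lev_eq_UN_layer)
  then show "w \<in> insert u (labels u)"
  proof cases
    case (2 k)
    have "u \<notin> labels w"
      using depth_of_label_less[OF \<open>w \<in> layer t k\<close>] depth_of_mem_layer[OF assms] \<open>k < j\<close>
      by fastforce
    then show ?thesis using \<open>total_adj u w\<close> by (simp add: total_adj_iff_labels)
  qed simp
qed

lemma card_labels_le:
  assumes "u \<in> layer t j"
  shows "card (labels u) \<le> t"
proof (cases j)
  case (Suc j')
  then obtain p B R where "u = Child p B R" "fcard (B |\<union>| R) \<le> t"
    using assms by (auto simp: mem_layer_Suc_iff)
  then show ?thesis by (simp add: fcard.rep_eq)
qed (use assms in simp)

lemma finite_disjoint_subset_pairs:
  "finite N \<Longrightarrow> finite {(B, R). B \<subseteq> N \<and> R \<subseteq> N \<and> B \<inter> R = {}}"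
  by (rule finite_subset[of _ "Pow N \<times> Pow N"]) auto

lemma card_disjoint_subset_pairs:
  assumes "finite N"
  shows "card {(B, R). B \<subseteq> N \<and> R \<subseteq> N \<and> B \<inter> R = {}} = 3 ^ card N"
proof -
  let ?colour = "\<lambda>(B, R). \<lambda>y\<in>N. if y \<in> B then 0 else if y \<in> R then 1 else 2 :: nat"
  let ?uncolour = "\<lambda>h. ({y \<in> N. h y = 0}, {y \<in> N. h y = 1})"
  have "bij_betw ?colour {(B, R). B \<subseteq> N \<and> R \<subseteq> N \<and> B \<inter> R = {}} (N \<rightarrow>\<^sub>E {0..<3})"
    by (rule bij_betw_byWitness[where f' = ?uncolour])
      (auto simp: fun_eq_iff PiE_iff split: if_splits, fastforce)
  then show ?thesis
    using assms by (simp add: bij_betw_same_card card_PiE)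
qed

definition children :: "nat \<Rightarrow> nat \<Rightarrow> node \<Rightarrow> node set" where
  "children t i u = {c \<in> layer t (Suc i). \<exists>B R. c = Child u B R}"

lemma children_subset_image_disjoint_pairs:
  assumes "u \<in> layer t i"
  shows "children t i u \<subseteq> (\<lambda>(B, R). Child u (Abs_fset B) (Abs_fset R)) `
    {(B, R). B \<subseteq> insert u (labels u) \<and> R \<subseteq> insert u (labels u) \<and> B \<inter> R = {}}"
    (is "_ \<subseteq> ?encode ` ?pairs")
proof
  fix c assume "c \<in> children t i u"
  then obtain B R where c: "c = Child u B R" and "B |\<inter>| R = {||}"
    and "fset (B |\<union>| R) \<subseteq> Nup (fst (lev t i)) u"
    by (auto simp: children_def mem_layer_Suc_iff)
  with Nup_subset_labels[OF assms]
  have "(fset B, fset R) \<in> ?pairs"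
    by (auto simp flip: inter_fset bot_fset.rep_eq)
  then show "c \<in> ?encode ` ?pairs"
    unfolding c by (rule rev_image_eqI) (simp add: fset_inverse)
qed

lemma finite_children:
  assumes "u \<in> layer t i"
  shows "finite (children t i u)"
  using children_subset_image_disjoint_pairs[OF assms]
  by (rule finite_subset) (intro finite_imageI finite_disjoint_subset_pairs finite.insertI finite_labels)

lemma card_children_le:
  assumes "u \<in> layer t i"
  shows "card (children t i u) \<le> 3 ^ (t + 1)"
proof -
  let ?N = "insert u (labels u)"
  let ?pairs = "{(B, R). B \<subseteq> ?N \<and> R \<subseteq> ?N \<and> B \<inter> R = {}}"
  have "finite ?pairs"
    by (simp add: finite_disjoint_subset_pairs)
  then have "card (children t i u) \<le> card ?pairs"
    using children_subset_image_disjoint_pairs[OF assms]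
    by (meson card_image_le card_mono finite_imageI le_trans)
  also have "\<dots> = 3 ^ card ?N"
    by (simp add: card_disjoint_subset_pairs)
  also have "\<dots> \<le> 3 ^ (t + 1)"
    using card_labels_le[OF assms] card_insert_le_m1[of "t + 1" "labels u" u]
    by (intro power_increasing) auto
  finally show ?thesis .
qed

lemma is_desc_depth_le: "is_desc u v \<Longrightarrow> depth u \<le> depth v"
  by (induction rule: is_desc.induct) auto

lemma is_desc_Root: "v \<in> vertices t \<Longrightarrow> is_desc Root v"
proof -
  have "v \<in> layer t i \<Longrightarrow> is_desc Root v" for i
    by (induction i arbitrary: v) (auto simp: mem_layer_Suc_iff intro: is_desc.intros)
  then show "v \<in> vertices t \<Longrightarrow> is_desc Root v" by (auto simp: vertices_def)
qed

lemma parent_mem_vertices: "Child u B R \<in> vertices t \<Longrightarrow> u \<in> vertices t"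
proof -
  assume "Child u B R \<in> vertices t"
  then obtain i where "Child u B R \<in> layer t i" by (auto simp: vertices_def)
  then show ?thesis by (cases i) (auto simp: mem_layer_Suc_iff vertices_def)
qed

lemma is_desc_mem_vertices: "is_desc u v \<Longrightarrow> v \<in> vertices t \<Longrightarrow> u \<in> vertices t"
  by (induction rule: is_desc.induct) (auto dest: parent_mem_vertices)

lemma is_desc_self_or_child: "is_desc u v \<Longrightarrow> v = u \<or> (\<exists>B R. is_desc (Child u B R) v)"
  by (induction rule: is_desc.induct) (auto intro: is_desc.intros)

lemma descendants_subset_children:
  assumes "u \<in> layer t i" "S \<subseteq> vertices t"
  shows "{v \<in> S. is_desc u v} \<subseteq> insert u (\<Union>c\<in>children t i u. {v \<in> S. is_desc c v})"
proof
  fix v assume v: "v \<in> {v \<in> S. is_desc u v}"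
  show "v \<in> insert u (\<Union>c\<in>children t i u. {v \<in> S. is_desc c v})"
  proof (cases "v = u")
    case False
    then obtain B R where desc: "is_desc (Child u B R) v"
      using v is_desc_self_or_child by blast
    then have "Child u B R \<in> vertices t"
      using v assms(2) is_desc_mem_vertices by blast
    then obtain k where k: "Child u B R \<in> layer t k" by (auto simp: vertices_def)
    then have "k = Suc i"
      using depth_of_mem_layer[OF k] depth_of_mem_layer[OF assms(1)] by simp
    then have "Child u B R \<in> children t i u" using k by (auto simp: children_def)
    then show ?thesis using desc v by blast
  qed simp
qed

lemma card_descendants_le_children:
  assumes "u \<in> layer t i" "S \<subseteq> vertices t" "finite S"
  shows "card {v \<in> S. is_desc u v} \<le> 1 + (\<Sum>c\<in>children t i u. card {v \<in> S. is_desc c v})"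
proof -
  have "card {v \<in> S. is_desc u v} \<le> card (insert u (\<Union>c\<in>children t i u. {v \<in> S. is_desc c v}))"
    using descendants_subset_children[OF assms(1,2)] assms(1,3)
    by (intro card_mono) (auto simp: finite_children)
  also have "\<dots> \<le> 1 + card (\<Union>c\<in>children t i u. {v \<in> S. is_desc c v})"
    by (cases "finite (\<Union>c\<in>children t i u. {v \<in> S. is_desc c v})") (simp_all add: card_insert_if)
  also have "\<dots> \<le> 1 + (\<Sum>c\<in>children t i u. card {v \<in> S. is_desc c v})"
    using card_UN_le[OF finite_children[OF assms(1)]] by simp
  finally show ?thesis .
qed

lemma layer_le_Max_depth:
  assumes "u \<in> layer t i" "finite S" "v \<in> S" "is_desc u v"
  shows "i \<le> Max (depth ` S)"
proof -
  have "depth v \<le> Max (depth ` S)"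
    using assms(2,3) by simp
  then show ?thesis
    using is_desc_depth_le[OF assms(4)] depth_of_mem_layer[OF assms(1)] by simp
qed

lemma ex_last_of_bounded:
  fixes P :: "nat \<Rightarrow> bool"
  assumes "P 0" and "\<And>i. P i \<Longrightarrow> i \<le> b"
  shows "\<exists>i. P i \<and> \<not> P (Suc i)"
proof (rule ccontr)
  assume "\<not> ?thesis"
  then have "P i" for i
    using assms(1) by (induction i) auto
  then show False using assms(2)[of "Suc b"] by simp
qed

lemma ex_ge_average:
  fixes f :: "'a \<Rightarrow> real"
  assumes "finite C" "real (card C) \<le> m" "0 \<le> a" "a < sum f C"
  shows "\<exists>c\<in>C. a / m \<le> f c"
proof (rule ccontr)
  assume "\<not> ?thesis"
  then have "sum f C \<le> real (card C) * (a / m)"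
    by (intro sum_bounded_above) (simp add: not_le less_imp_le)
  also have "\<dots> \<le> m * (a / m)"
    using assms(2,3) by (intro mult_right_mono) auto
  also have "\<dots> \<le> a"
    using assms(3) by (cases "m = 0") auto
  finally show False using assms(4) by simp
qed

theorem lemma4p8:
  fixes t n :: nat and S :: "node set"
  assumes "t \<ge> 1" and "n \<ge> 8"
    and "S \<subseteq> vertices t" and "finite S" and "card S = n"
  shows "\<exists>i u. u \<in> layer t i
    \<and> real n / (8 * 3 ^ (t + 1)) \<le> real (card {v \<in> S. is_desc u v})
    \<and> real (card {v \<in> S. is_desc u v}) \<le> real n / 4
    \<and> (\<forall>w \<in> layer t i. real (card {v \<in> S. is_desc w v}) \<le> real n / 4)"
proof -
  let ?d = "\<lambda>u. card {v \<in> S. is_desc u v}"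
  define heavy where "heavy i \<longleftrightarrow> (\<exists>u\<in>layer t i. real n / 4 < real (?d u))" for i
  have "{v \<in> S. is_desc Root v} = S"
    using assms(3) is_desc_Root by blast
  then have "heavy 0"
    using assms(2,5) by (simp add: heavy_def)
  moreover have "i \<le> Max (depth ` S)" if "heavy i" for i
  proof -
    obtain u where u: "u \<in> layer t i" "real n / 4 < real (?d u)"
      using \<open>heavy i\<close> unfolding heavy_def by blast
    then have "{v \<in> S. is_desc u v} \<noteq> {}"
      by (intro notI) simp
    then show ?thesis
      using layer_le_Max_depth[OF u(1) assms(4)] by blast
  qed
  ultimately obtain i where "heavy i" "\<not> heavy (Suc i)"
    using ex_last_of_bounded by blast
  then obtain x where x: "x \<in> layer t i" "real n / 4 < real (?d x)"
    and light: "\<forall>w\<in>layer t (Suc i). real (?d w) \<le> real n / 4"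
    by (auto simp: heavy_def not_less)
  have "real n / 8 < (\<Sum>c\<in>children t i x. real (?d c))"
    using card_descendants_le_children[OF x(1) assms(3,4)] x(2) assms(2)
    by (simp flip: of_nat_sum)
  moreover have "real (card (children t i x)) \<le> 3 ^ (t + 1)"
    using card_children_le[OF x(1)] by (metis of_nat_le_iff of_nat_numeral of_nat_power)
  ultimately obtain c where "c \<in> children t i x" "real n / 8 / 3 ^ (t + 1) \<le> real (?d c)"
    using ex_ge_average[OF finite_children[OF x(1)], of "3 ^ (t + 1)" "real n / 8"] by auto
  then show ?thesis
    using light by (auto simp: children_def)
qed

end
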